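(* Let $(Q,I)$ be a special biserial bound quiver over an algebraically closed field $k$. Let $u-\lambda v\in I$ be a binomial relation from a point $x$ to a point $y$ (so $u\neq v$ are parallel paths from $x$ to $y$, $u,v\notin I$, $\lambda\in k\setminus\{0\}$). Suppose that $u$ starts with a simple cycle $a=\alpha_1\cdots\alpha_r$ at $x$ (i.e. $u=ap$ for some path $p$). Then: (a) If $x\neq y$: (1) if $u$ and $v$ have at least one arrow in common, then there exist a path $p$ from $x$ to $y$ and a nontrivial cycle $b$ at $y$ such that $u=ap$ and $v=pb$; (2) if $u$ and $v$ have no arrow in common, then there is a decomposition $a=a_1a_2$ with $a_1,a_2$ nontrivial paths, and a natural number $n\geq 1$, such that $u=a^na_1$. (b) If $x=y$, then there exists a simple cycle $b=\beta_1\cdots\beta_s$ at $x$ (having no arrow in common with $a$) such that one of the following holds, for some natural numbers $n,m$ and some scalar $\lambda\in k\setminus\{0\}$: (3) the relation is $a^n-\lambda b^m$, and $\alpha_r\beta_1\in I$, $\beta_s\alpha_1\in I$; (4) the relation is $(ab)^m-\lambda(ba)^m$, and $\alpha_r\alpha_1\in I$, $\beta_s\beta_1\in I$; (5) the relation is $(ab)^ma-\lambda(ba)^mb$, and $\alpha_r\alpha_1\in I$, $\beta_s\beta_1\in I$.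
   Context: A bound quiver $(Q,I)$ consists of a finite quiver $Q$ and an admissible ideal $I$ of the path algebra $kQ$, i.e. $(kQ^+)^m\subseteq I\subseteq (kQ^+)^2$ for some $m\geq 2$, where $kQ^+$ is the ideal generated by the arrows. Paths are composed left to right ($\alpha\beta$ means $\alpha$ then $\beta$). It is special biserial if (i) every point is the source of at most two arrows and the target of at most two arrows, and (ii) for every arrow $\alpha:x\to y$ there is at most one arrow $\beta$ starting at $y$ with $\alpha\beta\notin I$ and at most one arrow $\gamma$ ending at $x$ with $\gamma\alpha\notin I$. A binomial relation is an element $u-\lambda v\in I$ with $u,v$ distinct parallel paths not in $I$ and $\lambda\neq0$. A cycle at $x$ is a path from $x$ to $x$; it is simple if $x$ occurs only at its beginning and end. *)

theory Defs
  imports "HOL-Computational_Algebra.Polynomial"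
begin

(* A path is a pair (x, as): start vertex x and the list of arrows (composed left to right).
   The trivial path e_x is (x, []). *)

type_synonym ('v,'a) qpath = "'v \<times> 'a list"

definition finite_quiver :: "'v set \<Rightarrow> 'a set \<Rightarrow> ('a \<Rightarrow> 'v) \<Rightarrow> ('a \<Rightarrow> 'v) \<Rightarrow> bool" where
  "finite_quiver V E s t \<longleftrightarrow> finite V \<and> finite E \<and> (\<forall>\<alpha>\<in>E. s \<alpha> \<in> V \<and> t \<alpha> \<in> V)"

definition is_path :: "'v set \<Rightarrow> 'a set \<Rightarrow> ('a \<Rightarrow> 'v) \<Rightarrow> ('a \<Rightarrow> 'v) \<Rightarrow> ('v,'a) qpath \<Rightarrow> bool" where
  "is_path V E s t p \<longleftrightarrow> fst p \<in> V \<and> set (snd p) \<subseteq> E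
     \<and> (snd p \<noteq> [] \<longrightarrow> s (hd (snd p)) = fst p)
     \<and> (\<forall>i. Suc i < length (snd p) \<longrightarrow> t (snd p ! i) = s (snd p ! Suc i))"

definition pend :: "('a \<Rightarrow> 'v) \<Rightarrow> ('v,'a) qpath \<Rightarrow> 'v" where
  "pend t p = (if snd p = [] then fst p else t (last (snd p)))"

definition pcomp :: "('v,'a) qpath \<Rightarrow> ('v,'a) qpath \<Rightarrow> ('v,'a) qpath" where
  "pcomp p q = (fst p, snd p @ snd q)"

definition ppow :: "('v,'a) qpath \<Rightarrow> nat \<Rightarrow> ('v,'a) qpath" where
  "ppow p n = (fst p, concat (replicate n (snd p)))"

definition apath :: "('a \<Rightarrow> 'v) \<Rightarrow> 'a \<Rightarrow> 'a \<Rightarrow> ('v,'a) qpath" where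
  "apath s \<alpha> \<beta> = (s \<alpha>, [\<alpha>, \<beta>])"

(* Elements of the path algebra kQ: finitely supported k-valued functions on paths. *)
definition basis :: "('v,'a) qpath \<Rightarrow> ('v,'a) qpath \<Rightarrow> 'k::field" where
  "basis p = (\<lambda>w. if w = p then 1 else 0)"

definition in_kQ :: "'v set \<Rightarrow> 'a set \<Rightarrow> ('a \<Rightarrow> 'v) \<Rightarrow> ('a \<Rightarrow> 'v) \<Rightarrow> (('v,'a) qpath \<Rightarrow> 'k::field) \<Rightarrow> bool" where
  "in_kQ V E s t f \<longleftrightarrow> finite {w. f w \<noteq> 0} \<and> (\<forall>w. f w \<noteq> 0 \<longrightarrow> is_path V E s t w)"

(* multiplication in kQ (convolution over the ways of splitting a path) *)
definition pmult :: "('a \<Rightarrow> 'v) \<Rightarrow> (('v,'a) qpath \<Rightarrow> 'k::field) \<Rightarrow> (('v,'a) qpath \<Rightarrow> 'k) \<Rightarrow> ('v,'a) qpath \<Rightarrow> 'k" where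
  "pmult t f g = (\<lambda>(x, ws). \<Sum>i\<in>{0..length ws}. f (x, take i ws) * g (pend t (x, take i ws), drop i ws))"

definition is_ideal :: "'v set \<Rightarrow> 'a set \<Rightarrow> ('a \<Rightarrow> 'v) \<Rightarrow> ('a \<Rightarrow> 'v) \<Rightarrow> (('v,'a) qpath \<Rightarrow> 'k::field) set \<Rightarrow> bool" where
  "is_ideal V E s t I \<longleftrightarrow> I \<subseteq> {f. in_kQ V E s t f} \<and> (\<lambda>w. 0) \<in> I
     \<and> (\<forall>f\<in>I. \<forall>g\<in>I. (\<lambda>w. f w + g w) \<in> I)
     \<and> (\<forall>c. \<forall>f\<in>I. (\<lambda>w. c * f w) \<in> I)
     \<and> (\<forall>f\<in>I. \<forall>g. in_kQ V E s t g \<longrightarrow> pmult t g f \<in> I \<and> pmult t f g \<in> I)"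

(* admissible: (kQ^+)^m \<subseteq> I \<subseteq> (kQ^+)^2 for some m \<ge> 2;
   (kQ^+)^j is the span of the paths of length \<ge> j *)
definition admissible :: "'v set \<Rightarrow> 'a set \<Rightarrow> ('a \<Rightarrow> 'v) \<Rightarrow> ('a \<Rightarrow> 'v) \<Rightarrow> (('v,'a) qpath \<Rightarrow> 'k::field) set \<Rightarrow> bool" where
  "admissible V E s t I \<longleftrightarrow> is_ideal V E s t I
     \<and> (\<exists>m\<ge>2. \<forall>p. is_path V E s t p \<and> length (snd p) \<ge> m \<longrightarrow> basis p \<in> I)
     \<and> (\<forall>f\<in>I. \<forall>p. length (snd p) < 2 \<longrightarrow> f p = 0)"

definition special_biserial :: "'v set \<Rightarrow> 'a set \<Rightarrow> ('a \<Rightarrow> 'v) \<Rightarrow> ('a \<Rightarrow> 'v) \<Rightarrow> (('v,'a) qpath \<Rightarrow> 'k::field) set \<Rightarrow> bool" where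
  "special_biserial V E s t I \<longleftrightarrow>
     (\<forall>x\<in>V. card {\<alpha>\<in>E. s \<alpha> = x} \<le> 2 \<and> card {\<alpha>\<in>E. t \<alpha> = x} \<le> 2)
     \<and> (\<forall>\<alpha>\<in>E. (\<forall>\<beta>\<in>E. \<forall>\<beta>'\<in>E. s \<beta> = t \<alpha> \<and> s \<beta>' = t \<alpha> \<and> basis (apath s \<alpha> \<beta>) \<notin> I
                     \<and> basis (apath s \<alpha> \<beta>') \<notin> I \<longrightarrow> \<beta> = \<beta>')
              \<and> (\<forall>\<gamma>\<in>E. \<forall>\<gamma>'\<in>E. t \<gamma> = s \<alpha> \<and> t \<gamma>' = s \<alpha> \<and> basis (apath s \<gamma> \<alpha>) \<notin> I
                     \<and> basis (apath s \<gamma>' \<alpha>) \<notin> I \<longrightarrow> \<gamma> = \<gamma>'))"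

definition simple_cycle :: "'v set \<Rightarrow> 'a set \<Rightarrow> ('a \<Rightarrow> 'v) \<Rightarrow> ('a \<Rightarrow> 'v) \<Rightarrow> 'v \<Rightarrow> ('v,'a) qpath \<Rightarrow> bool" where
  "simple_cycle V E s t x a \<longleftrightarrow> is_path V E s t a \<and> fst a = x \<and> pend t a = x \<and> snd a \<noteq> []
     \<and> (\<forall>i. Suc i < length (snd a) \<longrightarrow> t (snd a ! i) \<noteq> x)"

end

theory Submission
  imports Defs
begin

(* If x <> y, after a the path u goes on
      with hd v (giving v = p b) or with a again (giving u = a^n a1).  If x = y, the first
      return b of v to x is a simple cycle disjoint from a, and the junctions of a and b decide
      between the forms a^n - lam b^m, (ab)^m - lam (ba)^m and (ab)^m a - lam (ba)^m b. *)

lemma pend_Nil [simp]: "pend t (x, []) = x"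
  by (simp add: pend_def)

lemma pend_Cons [simp]: "pend t (x, \<alpha> # L) = pend t (t \<alpha>, L)"
  by (simp add: pend_def)

lemma pend_append: "pend t (x, L @ M) = pend t (pend t (x, L), M)"
  by (induction L arbitrary: x) auto

lemma pend_concat_replicate: "pend t (x, A) = x \<Longrightarrow> pend t (x, concat (replicate n A)) = x"
  by (induction n) (auto simp: pend_append)

lemma pmult_basis:
  fixes p q :: "'v \<times> 'a list" and t :: "'a \<Rightarrow> 'v"
  assumes "pend t p = fst q"
  shows "pmult t (basis p) (basis q) = (basis (pcomp p q) :: _ \<Rightarrow> 'k::field)"
proof (rule ext)
  fix w :: "'v \<times> 'a list"
  obtain x ws where w: "w = (x, ws)" by (cases w)
  have split_iff: "((x, take i ws) = p \<and> (pend t (x, take i ws), drop i ws) = q) \<longleftrightarrow>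
      (i = length (snd p) \<and> (x, ws) = pcomp p q)" if "i \<le> length ws" for i
  proof
    assume "(x, take i ws) = p \<and> (pend t (x, take i ws), drop i ws) = q"
    then show "i = length (snd p) \<and> (x, ws) = pcomp p q"
      using that by (auto simp: pcomp_def)
  next
    assume h: "i = length (snd p) \<and> (x, ws) = pcomp p q"
    then have "ws = snd p @ snd q" "x = fst p" by (auto simp: pcomp_def)
    then show "(x, take i ws) = p \<and> (pend t (x, take i ws), drop i ws) = q"
      using h assms by auto
  qed
  have "pmult t (basis p) (basis q) w =
        (\<Sum>i\<in>{0..length ws}. (if i = length (snd p) \<and> (x, ws) = pcomp p q then 1 else 0 :: 'k))"
    unfolding w pmult_def basis_def by (auto intro!: sum.cong simp: split_iff[symmetric])
  also have "\<dots> = basis (pcomp p q) w"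
    using w by (cases "(x, ws) = pcomp p q") (auto simp: basis_def pcomp_def)
  finally show "(pmult t (basis p) (basis q) w :: 'k) = basis (pcomp p q) w" .
qed

lemma pmult_diff_right:
  "pmult t f (\<lambda>w. g w - c * h w) = (\<lambda>w. pmult t f g w - c * pmult t f h w)"
  unfolding pmult_def by (auto simp: sum_subtractf sum_distrib_left algebra_simps)

lemma pmult_diff_left:
  "pmult t (\<lambda>w. g w - c * h w) f = (\<lambda>w. pmult t g f w - c * pmult t h f w)"
  unfolding pmult_def by (auto simp: sum_subtractf sum_distrib_left algebra_simps)

fun alt :: "'b list \<Rightarrow> 'b list \<Rightarrow> nat \<Rightarrow> 'b list" where
  "alt X Y 0 = []"
| "alt X Y (Suc n) = X @ alt Y X n"

lemma alt_prefix: "\<exists>R. alt X Y (n + k) = alt X Y n @ R"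
  by (induction n arbitrary: X Y) auto

lemma alt_even: "alt X Y (2 * m) = concat (replicate m (X @ Y))"
  by (induction m) auto

lemma alt_odd: "alt X Y (Suc (2 * m)) = concat (replicate m (X @ Y)) @ X"
  by (induction m) auto

locale special_biserial_quiver =
  fixes V :: "'v set" and E :: "'a set" and s t :: "'a \<Rightarrow> 'v"
    and I :: "(('v \<times> 'a list) \<Rightarrow> 'k::field) set"
  assumes quiver: "finite_quiver V E s t"
    and adm: "admissible V E s t I"
    and sb: "special_biserial V E s t I"
begin

abbreviation "path \<equiv> is_path V E s t"

lemma target_in_V: "\<alpha> \<in> E \<Longrightarrow> t \<alpha> \<in> V"
  and source_in_V: "\<alpha> \<in> E \<Longrightarrow> s \<alpha> \<in> V"
  using quiver by (auto simp: finite_quiver_def)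

lemma path_Nil [simp]: "path (x, []) \<longleftrightarrow> x \<in> V"
  by (simp add: is_path_def)

lemma path_Cons [simp]: "path (x, \<alpha> # L) \<longleftrightarrow> x \<in> V \<and> \<alpha> \<in> E \<and> s \<alpha> = x \<and> path (t \<alpha>, L)"
proof
  assume h: "path (x, \<alpha> # L)"
  then have "\<alpha> \<in> E" by (simp add: is_path_def)
  moreover have "t (L ! i) = s (L ! Suc i)" if "Suc i < length L" for i
    using h that unfolding is_path_def by (metis Suc_less_eq length_Cons nth_Cons_Suc snd_conv)
  moreover have "s (hd L) = t \<alpha>" if "L \<noteq> []"
    using h that unfolding is_path_def by (metis Suc_less_eq length_greater_0_conv
        nth_Cons_0 nth_Cons_Suc hd_conv_nth length_Cons snd_conv)
  ultimately show "x \<in> V \<and> \<alpha> \<in> E \<and> s \<alpha> = x \<and> path (t \<alpha>, L)"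
    using h target_in_V unfolding is_path_def by auto
next
  assume h: "x \<in> V \<and> \<alpha> \<in> E \<and> s \<alpha> = x \<and> path (t \<alpha>, L)"
  have "t ((\<alpha> # L) ! i) = s ((\<alpha> # L) ! Suc i)" if "Suc i < length (\<alpha> # L)" for i
    using h that unfolding is_path_def by (cases i) (auto simp: hd_conv_nth)
  then show "path (x, \<alpha> # L)" using h unfolding is_path_def by auto
qed

lemma path_start: "path (x, L) \<Longrightarrow> x \<in> V"
  by (simp add: is_path_def)

lemma path_append: "path (x, L @ M) \<longleftrightarrow> path (x, L) \<and> path (pend t (x, L), M)"
  by (induction L arbitrary: x) (auto dest: path_start)

lemma path_arrows: "path (x, L) \<Longrightarrow> set L \<subseteq> E"
  by (simp add: is_path_def)

lemma path_consecutive: "path (x, L) \<Longrightarrow> Suc i < length L \<Longrightarrow> t (L ! i) = s (L ! Suc i)"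
  by (simp add: is_path_def)

lemma path_first_arrow: "path (x, L) \<Longrightarrow> L \<noteq> [] \<Longrightarrow> s (hd L) = x"
  by (simp add: is_path_def)

lemma path_before_arrow: "path (x, P @ \<alpha> # M) \<Longrightarrow> pend t (x, P) = s \<alpha>"
  by (simp add: path_append)

lemma ideal: "is_ideal V E s t I"
  using adm by (simp add: admissible_def)

lemma I_add: "f \<in> I \<Longrightarrow> g \<in> I \<Longrightarrow> (\<lambda>w. f w + g w) \<in> I"
  using ideal by (simp add: is_ideal_def)

lemma I_smult: "f \<in> I \<Longrightarrow> (\<lambda>w. c * f w) \<in> I"
  using ideal by (simp add: is_ideal_def)

lemma I_diff: "f \<in> I \<Longrightarrow> g \<in> I \<Longrightarrow> (\<lambda>w. f w - g w) \<in> I"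
  using I_add[of f "\<lambda>w. (-1) * g w"] I_smult[of g "-1"] by simp

lemma I_zero: "(\<lambda>w. 0) \<in> I"
  using ideal by (simp add: is_ideal_def)

lemma basis_in_kQ: "path p \<Longrightarrow> in_kQ V E s t (basis p :: _ \<Rightarrow> 'k)"
proof -
  assume "path p"
  moreover have "{w. (basis p w :: 'k) \<noteq> 0} = {p}" by (auto simp: basis_def)
  ultimately show ?thesis unfolding in_kQ_def by (auto simp: basis_def)
qed

lemma I_mult_left: "f \<in> I \<Longrightarrow> path p \<Longrightarrow> pmult t (basis p) f \<in> I"
  using ideal basis_in_kQ by (simp add: is_ideal_def)

lemma I_mult_right: "f \<in> I \<Longrightarrow> path p \<Longrightarrow> pmult t f (basis p) \<in> I"
  using ideal basis_in_kQ by (simp add: is_ideal_def)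

lemma long_paths_in_I: "\<exists>m\<ge>2. \<forall>p. path p \<and> length (snd p) \<ge> m \<longrightarrow> basis p \<in> I"
  using adm by (simp add: admissible_def)

lemma I_vanishes_on_short: "f \<in> I \<Longrightarrow> length (snd p) < 2 \<Longrightarrow> f p = 0"
  using adm by (cases p) (simp add: admissible_def)

lemma binomial_both_or_neither:
  assumes rel: "(\<lambda>w. f w - c * g w) \<in> I" and c: "c \<noteq> 0"
  shows "f \<in> I \<longleftrightarrow> g \<in> I"
proof
  assume "f \<in> I"
  from I_smult[OF I_diff[OF this rel], of "1 / c"] c show "g \<in> I" by simp
next
  assume "g \<in> I"
  from I_add[OF rel I_smult[OF this, of c]] show "f \<in> I" by simp
qed

lemma subpath_in_I:
  assumes "basis (pend t (x, P), M) \<in> I" "path (x, P @ M @ S)"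
  shows "basis (x, P @ M @ S) \<in> I"
proof -
  have p1: "path (x, P)" and p3: "path (pend t (x, P @ M), S)"
    using assms(2) path_append[of x P "M @ S"] path_append[of "pend t (x, P)" M S]
    by (auto simp: pend_append)
  have "pmult t (basis (x, P)) (basis (pend t (x, P), M)) = (basis (x, P @ M) :: _ \<Rightarrow> 'k)"
    by (subst pmult_basis) (auto simp: pcomp_def)
  then have "basis (x, P @ M) \<in> I" using I_mult_left[OF assms(1) p1] by simp
  moreover have "pmult t (basis (x, P @ M)) (basis (pend t (x, P @ M), S))
      = (basis (x, P @ M @ S) :: _ \<Rightarrow> 'k)"
    by (subst pmult_basis) (auto simp: pcomp_def)
  ultimately show ?thesis using I_mult_right[OF _ p3] by metis
qed

lemma consecutive_notin_I:
  assumes "path (x, L)" "basis (x, L) \<notin> I" "Suc i < length L"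
  shows "basis (apath s (L ! i) (L ! Suc i)) \<notin> I"
proof -
  have L: "L = take i L @ [L ! i, L ! Suc i] @ drop (Suc (Suc i)) L"
    using assms(3) by (simp add: Cons_nth_drop_Suc)
  then have "pend t (x, take i L) = s (L ! i)"
    using assms(1) path_before_arrow[of x "take i L" "L ! i"] by (metis append_Cons)
  moreover have "basis (pend t (x, take i L), [L ! i, L ! Suc i]) \<notin> I"
    using subpath_in_I[of x "take i L" "[L ! i, L ! Suc i]" "drop (Suc (Suc i)) L"] assms L
    by metis
  ultimately show ?thesis by (simp add: apath_def)
qed

lemma unique_successor:
  "\<alpha> \<in> E \<Longrightarrow> \<beta> \<in> E \<Longrightarrow> \<beta>' \<in> E \<Longrightarrow> s \<beta> = t \<alpha> \<Longrightarrow> s \<beta>' = t \<alpha> \<Longrightarrow>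
   basis (apath s \<alpha> \<beta>) \<notin> I \<Longrightarrow> basis (apath s \<alpha> \<beta>') \<notin> I \<Longrightarrow> \<beta> = \<beta>'"
  using sb unfolding special_biserial_def by blast

lemma unique_predecessor:
  "\<alpha> \<in> E \<Longrightarrow> \<gamma> \<in> E \<Longrightarrow> \<gamma>' \<in> E \<Longrightarrow> t \<gamma> = s \<alpha> \<Longrightarrow> t \<gamma>' = s \<alpha> \<Longrightarrow>
   basis (apath s \<gamma> \<alpha>) \<notin> I \<Longrightarrow> basis (apath s \<gamma>' \<alpha>) \<notin> I \<Longrightarrow> \<gamma> = \<gamma>'"
  using sb unfolding special_biserial_def by blast

lemma at_most_two_out:
  assumes "x \<in> V" "\<alpha> \<in> E" "\<beta> \<in> E" "\<gamma> \<in> E" "s \<alpha> = x" "s \<beta> = x" "s \<gamma> = x" "\<alpha> \<noteq> \<beta>"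
  shows "\<gamma> = \<alpha> \<or> \<gamma> = \<beta>"
proof (rule ccontr)
  assume "\<not> ?thesis"
  then have "{\<alpha>, \<beta>, \<gamma>} \<subseteq> {\<epsilon>\<in>E. s \<epsilon> = x}" "card {\<alpha>, \<beta>, \<gamma>} = 3" using assms by auto
  moreover have "finite {\<epsilon>\<in>E. s \<epsilon> = x}" using quiver by (simp add: finite_quiver_def)
  ultimately have "3 \<le> card {\<epsilon>\<in>E. s \<epsilon> = x}" by (metis card_mono)
  moreover have "card {\<epsilon>\<in>E. s \<epsilon> = x} \<le> 2" using sb assms(1) by (simp add: special_biserial_def)
  ultimately show False by simp
qed

text \<open>A relation w - c (w z) with z a nontrivial cycle at the end of w forces w into I:
  iterating gives w - c^k (w z^k) in I, and w z^k lies in I once it is long enough.\<close>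
lemma cycle_relation_in_I:
  assumes q: "path (x, Q)" and w: "path (pend t (x, Q), W)"
    and closed: "pend t (pend t (x, Q), W) = pend t (x, Q)" and ne: "W \<noteq> []"
    and rel: "(\<lambda>z. basis (x, Q) z - c * basis (x, Q @ W) z) \<in> I"
  shows "basis (x, Q) \<in> I"
proof -
  define y where "y = pend t (x, Q)"
  define R where "R k = concat (replicate k W)" for k
  have R_path: "path (y, R k) \<and> pend t (y, R k) = y" for k
  proof (induction k)
    case 0
    then show ?case using q path_append[of x Q "[]"] by (simp add: R_def y_def)
  next
    case (Suc k)
    have "R (Suc k) = W @ R k" by (simp add: R_def)
    then show ?case using Suc w closed by (simp add: path_append pend_append y_def)
  qed
  have iterate: "(\<lambda>z. basis (x, Q) z - c ^ k * basis (x, Q @ R k) z) \<in> I" for k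
  proof (induction k)
    case 0
    then show ?case using I_zero by (simp add: R_def)
  next
    case (Suc k)
    have e1: "pmult t (basis (x, Q)) (basis (y, R k)) = (basis (x, Q @ R k) :: _ \<Rightarrow> 'k)"
      by (subst pmult_basis) (auto simp: pcomp_def y_def)
    have e2: "pmult t (basis (x, Q @ W)) (basis (y, R k)) = (basis (x, Q @ R (Suc k)) :: _ \<Rightarrow> 'k)"
      by (subst pmult_basis) (auto simp: pcomp_def y_def pend_append closed R_def)
    have "(\<lambda>z. basis (x, Q @ R k) z - c * basis (x, Q @ R (Suc k)) z) \<in> I"
      using I_mult_right[OF rel, of "(y, R k)"] R_path unfolding pmult_diff_left e1 e2 by blast
    from I_add[OF Suc I_smult[OF this, of "c ^ k"]] show ?case
      by (simp add: algebra_simps)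
  qed
  obtain m where m: "m \<ge> 2" "\<forall>p. path p \<and> length (snd p) \<ge> m \<longrightarrow> basis p \<in> I"
    using long_paths_in_I by blast
  have "length (R m) = m * length W" by (simp add: R_def length_concat sum_list_replicate)
  then have "length (R m) \<ge> m" using ne by (simp add: Suc_leI)
  moreover have "path (x, Q @ R m)" using q R_path by (simp add: path_append y_def)
  ultimately have "basis (x, Q @ R m) \<in> I" using m(2) by force
  from I_add[OF iterate[of m] I_smult[OF this, of "c ^ m"]] show ?thesis by simp
qed

text \<open>Two paths outside I starting with the same arrow agree as long as both are defined,
  because at each step at most one arrow can follow outside I.\<close>
lemma common_first_arrow_nth:
  assumes "path (x, L)" "path (x, M)" "basis (x, L) \<notin> I" "basis (x, M) \<notin> I"
    "L \<noteq> []" "M \<noteq> []" "hd L = hd M"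
  shows "i < min (length L) (length M) \<Longrightarrow> L ! i = M ! i"
proof (induction i)
  case 0
  then show ?case using assms by (simp add: hd_conv_nth)
next
  case (Suc i)
  have "L ! i \<in> E" "L ! Suc i \<in> E" "M ! Suc i \<in> E"
    using path_arrows[OF assms(1)] path_arrows[OF assms(2)] Suc.prems by (auto intro: nth_mem)
  moreover have "t (L ! i) = s (L ! Suc i)" "t (M ! i) = s (M ! Suc i)"
    using path_consecutive[OF assms(1), of i] path_consecutive[OF assms(2), of i] Suc.prems by auto
  moreover have "basis (apath s (L ! i) (L ! Suc i)) \<notin> I" "basis (apath s (M ! i) (M ! Suc i)) \<notin> I"
    using consecutive_notin_I[OF assms(1,3), of i] consecutive_notin_I[OF assms(2,4), of i] Suc.prems
    by auto
  ultimately show ?case using unique_successor[of "L ! i" "L ! Suc i" "M ! Suc i"] Suc by auto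
qed

lemma common_first_arrow_prefix:
  assumes "path (x, L)" "path (x, M)" "basis (x, L) \<notin> I" "basis (x, M) \<notin> I"
    "L \<noteq> []" "M \<noteq> []" "hd L = hd M"
  shows "(\<exists>R. L = M @ R) \<or> (\<exists>R. M = L @ R)"
proof (cases "length L \<le> length M")
  case True
  have "take (length L) M = L"
    by (rule nth_equalityI) (use True common_first_arrow_nth[OF assms] in auto)
  then show ?thesis by (metis append_take_drop_id)
next
  case False
  have "take (length M) L = M"
    by (rule nth_equalityI) (use False common_first_arrow_nth[OF assms] in auto)
  then show ?thesis by (metis append_take_drop_id)
qed

lemma simple_cycle_facts:
  assumes "simple_cycle V E s t x (x, A)"
  shows "A \<noteq> []" "path (x, A)" "pend t (x, A) = x" "\<And>i. Suc i < length A \<Longrightarrow> t (A ! i) \<noteq> x"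
  using assms by (auto simp: simple_cycle_def)

lemma simple_cycle_ends:
  assumes sc: "simple_cycle V E s t x (x, A)"
  shows "hd A \<in> E" "last A \<in> E" "s (hd A) = x" "t (last A) = x" "hd A \<in> set A" "last A \<in> set A"
    "pend t (x, butlast A) = s (last A)"
proof -
  note f = simple_cycle_facts[OF sc]
  show "hd A \<in> E" "last A \<in> E" using path_arrows[OF f(2)] f(1) by auto
  show "s (hd A) = x" using path_first_arrow[OF f(2) f(1)] .
  show "t (last A) = x" using f(1,3) by (simp add: pend_def)
  show "hd A \<in> set A" "last A \<in> set A" using f(1) by auto
  show "pend t (x, butlast A) = s (last A)"
    using f(1,2) path_before_arrow[of x "butlast A" "last A" "[]"] by simp
qed

lemma simple_cycle_proper_prefix:
  assumes sc: "simple_cycle V E s t x (x, A)" and "0 < k" "k < length A"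
  shows "pend t (x, take k A) \<noteq> x"
proof -
  have "take k A \<noteq> []" using assms by (cases A) auto
  then have "pend t (x, take k A) = t (A ! (k - 1))"
    using assms by (simp add: pend_def last_conv_nth min_def)
  then show ?thesis using simple_cycle_facts(4)[OF sc, of "k - 1"] assms by simp
qed

lemma simple_cycle_arrow_from_base:
  assumes sc: "simple_cycle V E s t x (x, A)" and "i < length A" "s (A ! i) = x"
  shows "i = 0"
proof (rule ccontr)
  assume "i \<noteq> 0"
  then have "t (A ! (i - 1)) = s (A ! i)"
    using path_consecutive[OF simple_cycle_facts(2)[OF sc], of "i - 1"] assms by simp
  then show False using simple_cycle_facts(4)[OF sc, of "i - 1"] assms \<open>i \<noteq> 0\<close> by simp
qed

lemma simple_cycle_not_first_arrow:
  assumes sc: "simple_cycle V E s t x (x, A)" and "s \<beta> = x" "\<beta> \<noteq> hd A"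
  shows "\<beta> \<notin> set A"
proof
  assume "\<beta> \<in> set A"
  then obtain i where "i < length A" "A ! i = \<beta>" by (meson in_set_conv_nth)
  then show False using simple_cycle_arrow_from_base[OF sc] simple_cycle_facts(1)[OF sc] assms
    by (metis hd_conv_nth)
qed

lemma first_return:
  assumes p: "path (x, L)" and ne: "L \<noteq> []" and closed: "pend t (x, L) = x"
  obtains B R where "simple_cycle V E s t x (x, B)" "L = B @ R"
proof -
  have ex: "length L - 1 < length L \<and> t (L ! (length L - 1)) = x"
    using closed ne by (simp add: pend_def last_conv_nth)
  define j where "j = (LEAST j. j < length L \<and> t (L ! j) = x)"
  have j: "j < length L \<and> t (L ! j) = x"
    unfolding j_def by (rule LeastI[of "\<lambda>j. j < length L \<and> t (L ! j) = x", OF ex])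
  have before: "\<not> (i < length L \<and> t (L ! i) = x)" if "i < j" for i
    using that unfolding j_def by (rule not_less_Least)
  define B where "B = take (Suc j) L"
  have L: "L = B @ drop (Suc j) L" by (simp add: B_def)
  have "path (x, B)" using p L path_append by metis
  moreover have "pend t (x, B) = x"
    using j ne by (simp add: B_def pend_def take_Suc_conv_app_nth)
  moreover have "t (B ! i) \<noteq> x" if "Suc i < length B" for i
    using that before[of i] j by (simp add: B_def)
  moreover have "B \<noteq> []" using ne by (simp add: B_def)
  ultimately have "simple_cycle V E s t x (x, B)" by (simp add: simple_cycle_def)
  then show thesis using L that by blast
qed

lemma cycle_continuation:
  assumes "path (x, A @ R)" "basis (x, A @ R) \<notin> I" "pend t (x, A) = x" "A \<noteq> []" "R \<noteq> []"
  shows "path (x, R)" "basis (x, R) \<notin> I" "hd R \<in> E" "s (hd R) = x"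
    "basis (apath s (last A) (hd R)) \<notin> I"
proof -
  show pR: "path (x, R)" using assms(1,3) by (simp add: path_append)
  show "basis (x, R) \<notin> I" using subpath_in_I[of x A R "[]"] assms(1-3) by auto
  show "hd R \<in> E" using path_arrows[OF pR] assms(5) by auto
  show "s (hd R) = x" using path_first_arrow[OF pR assms(5)] .
  have "(A @ R) ! (length A - 1) = last A" "(A @ R) ! Suc (length A - 1) = hd R"
    using assms(4,5) by (auto simp: nth_append last_conv_nth hd_conv_nth)
  then show "basis (apath s (last A) (hd R)) \<notin> I"
    using consecutive_notin_I[OF assms(1,2), of "length A - 1"] assms(4,5) by simp
qed

lemma closed_path_starts_with_cycle:
  assumes sc: "simple_cycle V E s t x (x, A)" and nA: "basis (x, A) \<notin> I"
    and L: "path (x, L)" "basis (x, L) \<notin> I" "L \<noteq> []" "hd L = hd A" "pend t (x, L) = x"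
  shows "\<exists>R. L = A @ R"
proof -
  note f = simple_cycle_facts[OF sc]
  from common_first_arrow_prefix[OF L(1) f(2) L(2) nA L(3) f(1) L(4)]
  show ?thesis
  proof
    assume "\<exists>R. A = L @ R"
    then obtain R where R: "A = L @ R" by blast
    have "R = []"
    proof (rule ccontr)
      assume "R \<noteq> []"
      then have "take (length L) A = L" "0 < length L" "length L < length A" using R L(3) by auto
      then show False using simple_cycle_proper_prefix[OF sc] L(5) by metis
    qed
    then show ?thesis using R by simp
  qed
qed

definition follows_only :: "'a \<Rightarrow> 'a \<Rightarrow> bool" where
  "follows_only \<alpha> \<beta> \<longleftrightarrow> (\<forall>\<gamma>\<in>E. s \<gamma> = t \<alpha> \<and> basis (apath s \<alpha> \<gamma>) \<notin> I \<longrightarrow> \<gamma> = \<beta>)"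

lemma follows_onlyD:
  "follows_only \<alpha> \<beta> \<Longrightarrow> \<gamma> \<in> E \<Longrightarrow> s \<gamma> = t \<alpha> \<Longrightarrow> basis (apath s \<alpha> \<gamma>) \<notin> I \<Longrightarrow> \<gamma> = \<beta>"
  unfolding follows_only_def by blast

lemma follows_only_if_notin_I:
  "\<alpha> \<in> E \<Longrightarrow> \<beta> \<in> E \<Longrightarrow> s \<beta> = t \<alpha> \<Longrightarrow> basis (apath s \<alpha> \<beta>) \<notin> I \<Longrightarrow> follows_only \<alpha> \<beta>"
  unfolding follows_only_def using unique_successor by blast

lemma periodic_decomposition:
  assumes sc: "simple_cycle V E s t x (x, A)" and nA: "basis (x, A) \<notin> I"
    and self: "follows_only (last A) (hd A)"
  shows "path (x, L) \<Longrightarrow> basis (x, L) \<notin> I \<Longrightarrow> L \<noteq> [] \<Longrightarrow> hd L = hd A \<Longrightarrow>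
    \<exists>n k. k < length A \<and> L = concat (replicate n A) @ take k A"
proof (induction "length L" arbitrary: L rule: less_induct)
  case less
  note f = simple_cycle_facts[OF sc]
  from common_first_arrow_prefix[OF less.prems(1) f(2) less.prems(2) nA less.prems(3) f(1)
      less.prems(4)]
  consider R where "L = A @ R" "R \<noteq> []" | R where "A = L @ R"
    by (metis append_Nil2)
  then show ?case
  proof cases
    case (1 R)
    note cont = cycle_continuation[of x A R, folded 1(1), OF less.prems(1,2) f(3,1) 1(2)]
    have "hd R = hd A"
      using follows_onlyD[OF self cont(3)] cont(4,5) simple_cycle_ends(4)[OF sc] by simp
    then obtain n k where "k < length A" "R = concat (replicate n A) @ take k A"
      using less.hyps[of R] cont 1 f(1) by auto
    then show ?thesis using 1 by (intro exI[of _ "Suc n"] exI[of _ k]) simp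
  next
    case (2 R)
    show ?thesis
    proof (cases "R = []")
      case True
      then show ?thesis using 2 f(1) by (intro exI[of _ 1] exI[of _ 0]) simp
    next
      case False
      then show ?thesis using 2 by (intro exI[of _ 0] exI[of _ "length L"]) simp
    qed
  qed
qed

lemma closed_periodic:
  assumes sc: "simple_cycle V E s t x (x, A)" and nA: "basis (x, A) \<notin> I"
    and self: "follows_only (last A) (hd A)"
    and L: "path (x, L)" "basis (x, L) \<notin> I" "L \<noteq> []" "hd L = hd A" "pend t (x, L) = x"
  shows "\<exists>n. L = concat (replicate n A)"
proof -
  obtain n k where nk: "k < length A" "L = concat (replicate n A) @ take k A"
    using periodic_decomposition[OF sc nA self L(1-4)] by blast
  have "pend t (x, take k A) = x"
    using L(5) nk(2) pend_concat_replicate[OF simple_cycle_facts(3)[OF sc], of n]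
    by (simp add: pend_append)
  then have "k = 0" using simple_cycle_proper_prefix[OF sc _ nk(1)] by auto
  then show ?thesis using nk(2) by auto
qed

lemma alternating_decomposition:
  assumes scA: "simple_cycle V E s t x (x, A)" and nA: "basis (x, A) \<notin> I"
    and scB: "simple_cycle V E s t x (x, B)" and nB: "basis (x, B) \<notin> I"
    and AB: "follows_only (last A) (hd B)" and BA: "follows_only (last B) (hd A)"
  shows "path (x, L) \<Longrightarrow> basis (x, L) \<notin> I \<Longrightarrow> L \<noteq> [] \<Longrightarrow> pend t (x, L) = x \<Longrightarrow>
    (hd L = hd A \<longrightarrow> (\<exists>N. L = alt A B N)) \<and> (hd L = hd B \<longrightarrow> (\<exists>N. L = alt B A N))"
proof (induction "length L" arbitrary: L rule: less_induct)
  case less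
  have step: "\<exists>N. L = alt C D N"
    if scC: "simple_cycle V E s t x (x, C)" and nC: "basis (x, C) \<notin> I"
      and CD: "follows_only (last C) (hd D)" and h: "hd L = hd C"
      and IH: "\<And>R. length R < length L \<Longrightarrow> path (x, R) \<Longrightarrow> basis (x, R) \<notin> I \<Longrightarrow> R \<noteq> [] \<Longrightarrow>
                 pend t (x, R) = x \<Longrightarrow> hd R = hd D \<Longrightarrow> \<exists>N. R = alt D C N"
    for C D
  proof -
    note f = simple_cycle_facts[OF scC]
    obtain R where R: "L = C @ R"
      using closed_path_starts_with_cycle[OF scC nC less.prems(1-3) h less.prems(4)] by blast
    show ?thesis
    proof (cases "R = []")
      case True
      then show ?thesis using R by (intro exI[of _ 1]) simp
    next
      case False
      note cont = cycle_continuation[of x C R, folded R, OF less.prems(1,2) f(3,1) False]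
      have "pend t (x, R) = x" using less.prems(4) R f(3) by (simp add: pend_append)
      moreover have "hd R = hd D"
        using follows_onlyD[OF CD cont(3)] cont(4,5) simple_cycle_ends(4)[OF scC] by simp
      ultimately obtain N where "R = alt D C N" using IH[of R] R f(1) cont False by auto
      then show ?thesis using R by (intro exI[of _ "Suc N"]) simp
    qed
  qed
  show ?case
    using step[OF scA nA AB] step[OF scB nB BA] less.hyps by blast
qed

text \<open>A path outside I which starts outside a simple cycle A, and which can reach the first
  arrow of A only from an arrow of A, never meets A: its first arrow in A would have to be
  preceded by an arrow of A, by uniqueness of predecessors along A.\<close>
lemma avoids_cycle:
  assumes sc: "simple_cycle V E s t x (x, A)" and nA: "basis (x, A) \<notin> I"
    and L: "path (z, L)" "basis (z, L) \<notin> I" "L \<noteq> []" "hd L \<notin> set A"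
    and entry: "\<And>j. 0 < j \<Longrightarrow> j < length L \<Longrightarrow> L ! j = hd A \<Longrightarrow> L ! (j - 1) \<in> set A"
  shows "set L \<inter> set A = {}"
proof (rule ccontr)
  assume "set L \<inter> set A \<noteq> {}"
  then obtain j0 where j0: "j0 < length L" "L ! j0 \<in> set A" by (metis disjoint_iff in_set_conv_nth)
  define j where "j = (LEAST j. j < length L \<and> L ! j \<in> set A)"
  have j: "j < length L" "L ! j \<in> set A"
    using LeastI[of "\<lambda>j. j < length L \<and> L ! j \<in> set A", OF conjI[OF j0]] unfolding j_def by auto
  have j_pos: "j \<noteq> 0"
  proof
    assume "j = 0"
    with j(2) L(3) have "hd L \<in> set A" by (simp add: hd_conv_nth)
    with L(4) show False by simp
  qed
  have before: "L ! (j - 1) \<notin> set A"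
    using not_less_Least[of "j - 1" "\<lambda>j. j < length L \<and> L ! j \<in> set A"] j(1) j_pos
    unfolding j_def[symmetric] by auto
  have j_suc: "Suc (j - 1) = j" using j_pos by simp
  obtain i where i: "i < length A" "A ! i = L ! j" using j(2) by (meson in_set_conv_nth)
  show False
  proof (cases "i = 0")
    case True
    then have "L ! j = hd A" using i simple_cycle_facts(1)[OF sc] by (simp add: hd_conv_nth)
    then show False using entry[of j] j j_pos before by simp
  next
    case False
    note pA = simple_cycle_facts(2)[OF sc]
    have "basis (apath s (A ! (i - 1)) (A ! i)) \<notin> I" "t (A ! (i - 1)) = s (A ! i)"
      using consecutive_notin_I[OF pA nA, of "i - 1"] path_consecutive[OF pA, of "i - 1"] i False
      by auto
    moreover have "basis (apath s (L ! (j - 1)) (L ! j)) \<notin> I" "t (L ! (j - 1)) = s (L ! j)"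
      using consecutive_notin_I[OF L(1,2), of "j - 1"] path_consecutive[OF L(1), of "j - 1"] j j_suc
      by auto
    moreover have "A ! (i - 1) \<in> E" "A ! i \<in> E" "L ! (j - 1) \<in> E"
      using path_arrows[OF pA] path_arrows[OF L(1)] i j by (auto intro: nth_mem)
    ultimately have "L ! (j - 1) = A ! (i - 1)"
      using unique_predecessor[of "A ! i" "L ! (j - 1)" "A ! (i - 1)"] i by auto
    then show False using before i by auto
  qed
qed

text \<open>For two simple cycles A, B at x with distinct first and distinct last arrows, the four
  junction compositions (last A)(hd A), (last A)(hd B), (last B)(hd A), (last B)(hd B) obey the
  special biserial conditions; since only hd A and hd B leave x, either each cycle can only
  follow itself, or each cycle can only follow the other one.\<close>
lemma junction_cases:
  assumes scA: "simple_cycle V E s t x (x, A)" and scB: "simple_cycle V E s t x (x, B)"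
    and hd_ne: "hd A \<noteq> hd B" and last_ne: "last A \<noteq> last B"
  shows "(follows_only (last A) (hd A) \<and> follows_only (last B) (hd B)
           \<and> basis (apath s (last A) (hd B)) \<in> I \<and> basis (apath s (last B) (hd A)) \<in> I)
       \<or> (follows_only (last A) (hd B) \<and> follows_only (last B) (hd A)
           \<and> basis (apath s (last A) (hd A)) \<in> I \<and> basis (apath s (last B) (hd B)) \<in> I)"
proof -
  note a = simple_cycle_ends[OF scA] and b = simple_cycle_ends[OF scB]
  have xV: "x \<in> V" using path_start[OF simple_cycle_facts(2)[OF scA]] .
  define J where "J \<alpha> \<beta> \<longleftrightarrow> basis (apath s \<alpha> \<beta>) \<notin> I" for \<alpha> \<beta>
  have out: "\<gamma> = hd A \<or> \<gamma> = hd B" if "\<gamma> \<in> E" "s \<gamma> = x" for \<gamma>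
    using at_most_two_out[OF xV a(1) b(1) that(1) a(3) b(3) that(2) hd_ne] .
  have one_successor: "\<not> (J \<alpha> (hd A) \<and> J \<alpha> (hd B))" if "\<alpha> \<in> E" "t \<alpha> = x" for \<alpha>
    using unique_successor[OF that(1) a(1) b(1)] that a(3) b(3) hd_ne unfolding J_def by auto
  have one_predecessor: "\<not> (J (last A) \<beta> \<and> J (last B) \<beta>)" if "\<beta> \<in> E" "s \<beta> = x" for \<beta>
    using unique_predecessor[OF that(1) a(2) b(2)] that a(4) b(4) last_ne unfolding J_def by auto
  have follows_A: "follows_only \<alpha> (hd A)" if "t \<alpha> = x" "\<not> J \<alpha> (hd B)" for \<alpha>
    using that out unfolding follows_only_def J_def by metis
  have follows_B: "follows_only \<alpha> (hd B)" if "t \<alpha> = x" "\<not> J \<alpha> (hd A)" for \<alpha>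
    using that out unfolding follows_only_def J_def by metis
  show ?thesis
  proof (cases "J (last A) (hd A) \<or> J (last B) (hd B)")
    case True
    then have "\<not> J (last A) (hd B)" "\<not> J (last B) (hd A)"
      using one_successor[OF a(2,4)] one_successor[OF b(2,4)]
        one_predecessor[OF a(1,3)] one_predecessor[OF b(1,3)] by blast+
    then show ?thesis using follows_A[OF a(4)] follows_B[OF b(4)] unfolding J_def by blast
  next
    case False
    then show ?thesis using follows_B[OF a(4)] follows_A[OF b(4)] unfolding J_def by blast
  qed
qed

end

locale binomial_relation = special_biserial_quiver V E s t I
  for V :: "'v set" and E :: "'a set" and s t :: "'a \<Rightarrow> 'v"
    and I :: "(('v \<times> 'a list) \<Rightarrow> 'k::field) set" +
  fixes U Vs :: "'a list" and x y :: 'v and lam :: 'k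
  assumes U_path: "is_path V E s t (x, U)" and Vs_path: "is_path V E s t (x, Vs)"
    and U_end: "pend t (x, U) = y" and Vs_end: "pend t (x, Vs) = y"
    and U_Vs: "U \<noteq> Vs"
    and U_notin: "basis (x, U) \<notin> I" and Vs_notin: "basis (x, Vs) \<notin> I"
    and lam: "lam \<noteq> 0"
    and rel: "(\<lambda>w. basis (x, U) w - lam * basis (x, Vs) w) \<in> I"
begin

text \<open>Both paths are nontrivial, since elements of I vanish on trivial paths.\<close>
lemma U_ne: "U \<noteq> []"
proof
  assume "U = []"
  then show False using I_vanishes_on_short[OF rel, of "(x, U)"] U_Vs by (simp add: basis_def)
qed

lemma Vs_ne: "Vs \<noteq> []"
proof
  assume "Vs = []"
  then show False using I_vanishes_on_short[OF rel, of "(x, Vs)"] U_Vs lam by (simp add: basis_def)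
qed

text \<open>U and Vs start with different arrows: otherwise one is a prefix of the other, the
  remainder is a cycle at y, and the relation would force the shorter path into I.\<close>
lemma distinct_first_arrows: "hd U \<noteq> hd Vs"
proof
  assume h: "hd U = hd Vs"
  have no_prefix: False
    if "path (x, W)" "basis (x, W) \<notin> I" "pend t (x, W) = y" "path (x, W @ R)" "pend t (x, W @ R) = y"
      "R \<noteq> []" "(\<lambda>w. basis (x, W) w - c * basis (x, W @ R) w) \<in> I" for W R and c :: 'k
    using cycle_relation_in_I[of x W R c] that by (simp add: path_append pend_append)
  from common_first_arrow_prefix[OF U_path Vs_path U_notin Vs_notin U_ne Vs_ne h]
  show False
  proof
    assume "\<exists>R. U = Vs @ R"
    then obtain R where R: "U = Vs @ R" by blast
    have "(\<lambda>w. (- 1 / lam) * (basis (x, U) w - lam * basis (x, Vs) w)) \<in> I" using I_smult[OF rel] .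
    moreover have "(\<lambda>w. (- 1 / lam) * (basis (x, U) w - lam * basis (x, Vs) w))
        = (\<lambda>w. basis (x, Vs) w - (1 / lam) * basis (x, Vs @ R) w)"
      using lam by (intro ext) (simp add: R field_simps)
    ultimately have "(\<lambda>w. basis (x, Vs) w - (1 / lam) * basis (x, Vs @ R) w) \<in> I" by simp
    then show False
      using no_prefix[of Vs R "1 / lam"] R U_Vs Vs_path Vs_notin Vs_end U_path U_end by auto
  next
    assume "\<exists>R. Vs = U @ R"
    then obtain R where R: "Vs = U @ R" by blast
    then show False
      using no_prefix[of U R lam] U_Vs U_path U_notin U_end Vs_path Vs_end rel by auto
  qed
qed

text \<open>Every arrow \<gamma> ending at x kills both paths from the left: \<gamma>U and \<gamma>Vs satisfy the
  relation \<gamma>U - lam \<gamma>Vs, and they cannot both be outside I because \<gamma> has at most one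
  successor outside I while U and Vs start differently.\<close>
lemma arrow_times_relation_paths_in_I:
  assumes \<gamma>: "\<gamma> \<in> E" "t \<gamma> = x"
  shows "basis (s \<gamma>, \<gamma> # U) \<in> I" "basis (s \<gamma>, \<gamma> # Vs) \<in> I"
proof -
  have x: "x \<in> V" using path_start[OF U_path] .
  have \<gamma>_path: "path (s \<gamma>, [\<gamma>])" and \<gamma>U: "path (s \<gamma>, \<gamma> # U)" and \<gamma>Vs: "path (s \<gamma>, \<gamma> # Vs)"
    using \<gamma> x U_path Vs_path source_in_V[OF \<gamma>(1)] by auto
  have "pmult t (basis (s \<gamma>, [\<gamma>])) (basis (x, W)) = (basis (s \<gamma>, \<gamma> # W) :: _ \<Rightarrow> 'k)" for W
    by (subst pmult_basis) (auto simp: \<gamma> pcomp_def)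
  then have rel\<gamma>: "(\<lambda>w. basis (s \<gamma>, \<gamma> # U) w - lam * basis (s \<gamma>, \<gamma> # Vs) w) \<in> I"
    using I_mult_left[OF rel \<gamma>_path] unfolding pmult_diff_right by simp
  have "\<not> (basis (s \<gamma>, \<gamma> # U) \<notin> I \<and> basis (s \<gamma>, \<gamma> # Vs) \<notin> I)"
  proof
    assume "basis (s \<gamma>, \<gamma> # U) \<notin> I \<and> basis (s \<gamma>, \<gamma> # Vs) \<notin> I"
    then have "basis (apath s \<gamma> (hd U)) \<notin> I" "basis (apath s \<gamma> (hd Vs)) \<notin> I"
      using consecutive_notin_I[OF \<gamma>U, of 0] consecutive_notin_I[OF \<gamma>Vs, of 0] U_ne Vs_ne
      by (auto simp: hd_conv_nth)
    moreover have "hd U \<in> E" "hd Vs \<in> E" "s (hd U) = t \<gamma>" "s (hd Vs) = t \<gamma>"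
      using path_arrows[OF U_path] path_arrows[OF Vs_path] U_ne Vs_ne
        path_first_arrow[OF U_path U_ne] path_first_arrow[OF Vs_path Vs_ne] \<gamma> by auto
    ultimately show False
      using unique_successor[OF \<gamma>(1)] distinct_first_arrows by blast
  qed
  then show "basis (s \<gamma>, \<gamma> # U) \<in> I" "basis (s \<gamma>, \<gamma> # Vs) \<in> I"
    using binomial_both_or_neither[OF rel\<gamma> lam] by blast+
qed

lemma cycle_then_relation_path_in_I:
  assumes sc: "simple_cycle V E s t x (x, C)" and p: "path (x, C @ W @ R)" and W: "W = U \<or> W = Vs"
  shows "basis (x, C @ W @ R) \<in> I"
proof -
  note c = simple_cycle_ends[OF sc]
  have C: "C = butlast C @ [last C]" using simple_cycle_facts(1)[OF sc] by simp
  have "basis (pend t (x, butlast C), last C # W) \<in> I"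
    using arrow_times_relation_paths_in_I[OF c(2,4)] W c(7) by auto
  then show ?thesis
    using subpath_in_I[of x "butlast C" "last C # W" R] p C by (metis append_Cons append_assoc
        append_Nil)
qed

end

locale cycle_relation = binomial_relation V E s t I U Vs x y lam
  for V :: "'v set" and E :: "'a set" and s t :: "'a \<Rightarrow> 'v"
    and I :: "(('v \<times> 'a list) \<Rightarrow> 'k::field) set"
    and U Vs :: "'a list" and x y :: 'v and lam :: 'k +
  fixes A P0 :: "'a list"
  assumes A_cycle: "simple_cycle V E s t x (x, A)" and U_eq: "U = A @ P0"
begin

lemma A_notin: "basis (x, A) \<notin> I"
  using subpath_in_I[of x "[]" A P0] U_path U_notin U_eq by auto

lemma hd_U: "hd U = hd A"
  using U_eq simple_cycle_facts(1)[OF A_cycle] by simp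

lemma first_arrow_of_Vs: "hd Vs \<in> E" "s (hd Vs) = x" "hd Vs \<noteq> hd A" "hd Vs \<notin> set A"
proof -
  show "hd Vs \<in> E" "s (hd Vs) = x"
    using path_arrows[OF Vs_path] path_first_arrow[OF Vs_path Vs_ne] Vs_ne by auto
  moreover show "hd Vs \<noteq> hd A" using distinct_first_arrows hd_U by simp
  ultimately show "hd Vs \<notin> set A" using simple_cycle_not_first_arrow[OF A_cycle] by blast
qed

lemma continuation_after_A:
  assumes "x \<noteq> y"
  shows "P0 \<noteq> []" "path (x, P0)" "basis (x, P0) \<notin> I" "pend t (x, P0) = y"
    "basis (apath s (last A) (hd P0)) \<notin> I" "hd P0 = hd A \<or> hd P0 = hd Vs"
proof -
  note f = simple_cycle_facts[OF A_cycle] and a = simple_cycle_ends[OF A_cycle]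
  show ne: "P0 \<noteq> []" using U_end U_eq f(3) assms by auto
  note cont = cycle_continuation[OF U_path[unfolded U_eq] U_notin[unfolded U_eq] f(3,1) ne]
  show "path (x, P0)" "basis (x, P0) \<notin> I" "basis (apath s (last A) (hd P0)) \<notin> I"
    using cont by auto
  show "pend t (x, P0) = y" using U_end U_eq f(3) by (simp add: pend_append)
  show "hd P0 = hd A \<or> hd P0 = hd Vs"
    using at_most_two_out[OF path_start[OF f(2)] a(1) first_arrow_of_Vs(1) cont(3) a(3)
        first_arrow_of_Vs(2) cont(4)] first_arrow_of_Vs(3) by auto
qed

text \<open>If U continues with the first arrow of Vs, then Vs = P0 R: the other prefix order
  would make U = A Vs R', which lies in I.\<close>
lemma continuation_by_Vs:
  assumes xy: "x \<noteq> y" and h: "hd P0 = hd Vs"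
  obtains R where "Vs = P0 @ R" "R \<noteq> []"
proof -
  note cont = continuation_after_A[OF xy]
  have not_longer: "P0 \<noteq> Vs @ R" for R
    using cycle_then_relation_path_in_I[OF A_cycle, of Vs R] U_path U_notin U_eq by auto
  from common_first_arrow_prefix[OF cont(2) Vs_path cont(3) Vs_notin cont(1) Vs_ne h]
  show thesis using not_longer that by (metis append_Nil2)
qed

lemma continuation_by_A:
  assumes xy: "x \<noteq> y" and h: "hd P0 = hd A"
  shows "set U \<inter> set Vs = {}"
    "\<exists>n k. 0 < k \<and> k < length A \<and> 1 \<le> n \<and> U = concat (replicate n A) @ take k A"
proof -
  note f = simple_cycle_facts[OF A_cycle] and a = simple_cycle_ends[OF A_cycle]
  have AA: "basis (apath s (last A) (hd A)) \<notin> I"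
    using continuation_after_A(5)[OF xy] h by simp
  have self: "follows_only (last A) (hd A)"
    using follows_only_if_notin_I[OF a(2,1)] a(3,4) AA by simp
  obtain n k where nk: "k < length A" "U = concat (replicate n A) @ take k A"
    using periodic_decomposition[OF A_cycle A_notin self U_path U_notin U_ne hd_U] by blast
  have "set U \<subseteq> set A" using nk(2) set_take_subset[of k A] by auto
  moreover have "set Vs \<inter> set A = {}"
  proof (rule avoids_cycle[OF A_cycle A_notin Vs_path Vs_notin Vs_ne first_arrow_of_Vs(4)])
    fix j assume j: "0 < j" "j < length Vs" "Vs ! j = hd A"
    then have "Suc (j - 1) = j" "Vs ! (j - 1) \<in> E" using path_arrows[OF Vs_path] by auto
    then have "basis (apath s (Vs ! (j - 1)) (hd A)) \<notin> I" "t (Vs ! (j - 1)) = s (hd A)"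
      using consecutive_notin_I[OF Vs_path Vs_notin, of "j - 1"] path_consecutive[OF Vs_path,
          of "j - 1"] j by auto
    then have "Vs ! (j - 1) = last A"
      using unique_predecessor[OF a(1) \<open>Vs ! (j - 1) \<in> E\<close> a(2)] a(3,4) AA by simp
    then show "Vs ! (j - 1) \<in> set A" using a(6) by simp
  qed
  ultimately show "set U \<inter> set Vs = {}" by blast
  have "k \<noteq> 0"
  proof
    assume "k = 0"
    then have "pend t (x, U) = x" using nk(2) pend_concat_replicate[OF f(3)] by simp
    then show False using U_end xy by simp
  qed
  moreover have "n \<noteq> 0"
  proof
    assume "n = 0"
    then have "length U < length A" using nk by simp
    then show False using U_eq by simp
  qed
  ultimately show "\<exists>n k. 0 < k \<and> k < length A \<and> 1 \<le> n \<and> U = concat (replicate n A) @ take k A"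
    using nk by (intro exI[of _ n] exI[of _ k]) simp
qed

text \<open>Case x = y: the first return of Vs to x is a simple cycle B outside I, disjoint from A
  (B can only meet A in hd A, which starts at x and so cannot occur inside B).\<close>
lemma return_cycle:
  assumes xy: "x = y"
  obtains B R where "simple_cycle V E s t x (x, B)" "Vs = B @ R" "basis (x, B) \<notin> I"
    "set A \<inter> set B = {}"
proof -
  obtain B R where B: "simple_cycle V E s t x (x, B)" "Vs = B @ R"
    using first_return[OF Vs_path Vs_ne] Vs_end xy by metis
  note fB = simple_cycle_facts[OF B(1)]
  have nB: "basis (x, B) \<notin> I"
    using subpath_in_I[of x "[]" B R] Vs_path Vs_notin B(2) by auto
  have "hd B \<notin> set A" using first_arrow_of_Vs(4) B(2) fB(1) by simp
  then have "set B \<inter> set A = {}"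
    using avoids_cycle[OF A_cycle A_notin fB(2) nB fB(1)]
      simple_cycle_arrow_from_base[OF B(1)] simple_cycle_ends(3)[OF A_cycle] by fastforce
  then show thesis using that B nB by blast
qed

text \<open>If A and B can only follow each other, U and Vs are alternating products of the same
  length, since U = A Vs R' and Vs = B U R' are excluded.\<close>
lemma alternating_case:
  assumes xy: "x = y" and B: "simple_cycle V E s t x (x, B)" "basis (x, B) \<notin> I" "hd Vs = hd B"
    and AB: "follows_only (last A) (hd B)" and BA: "follows_only (last B) (hd A)"
  shows "\<exists>m. (U = concat (replicate m (A @ B)) \<and> Vs = concat (replicate m (B @ A)))
           \<or> (U = concat (replicate m (A @ B)) @ A \<and> Vs = concat (replicate m (B @ A)) @ B)"
proof -
  note alt = alternating_decomposition[OF A_cycle A_notin B(1,2) AB BA]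
  obtain Nu where Nu: "U = alt A B Nu" using alt[OF U_path U_notin U_ne] U_end xy hd_U by auto
  obtain Nv where Nv: "Vs = alt B A Nv" using alt[OF Vs_path Vs_notin Vs_ne] Vs_end xy B(3) by auto
  have "\<not> Nu > Nv"
  proof
    assume "Nu > Nv"
    then obtain R where "U = A @ Vs @ R"
      using Nu Nv alt_prefix[of B A Nv "Nu - 1 - Nv"] by (cases Nu) auto
    then show False using cycle_then_relation_path_in_I[OF A_cycle] U_path U_notin by auto
  qed
  moreover have "\<not> Nv > Nu"
  proof
    assume "Nv > Nu"
    then obtain R where "Vs = B @ U @ R"
      using Nu Nv alt_prefix[of A B Nu "Nv - 1 - Nu"] by (cases Nv) auto
    then show False using cycle_then_relation_path_in_I[OF B(1)] Vs_path Vs_notin by auto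
  qed
  ultimately have "Nu = Nv" by simp
  moreover have "Nu = 2 * (Nu div 2) \<or> Nu = Suc (2 * (Nu div 2))" by presburger
  ultimately show ?thesis using Nu Nv alt_even alt_odd by metis
qed

lemma shared_arrow_case:
  assumes xy: "x \<noteq> y" and shared: "set U \<inter> set Vs \<noteq> {}"
  shows "\<exists>p b. path p \<and> fst p = x \<and> pend t p = y \<and> path b \<and> fst b = y \<and> pend t b = y
           \<and> snd b \<noteq> [] \<and> (x, U) = pcomp (x, A) p \<and> (x, Vs) = pcomp p b"
proof -
  note cont = continuation_after_A[OF xy]
  have "hd P0 = hd Vs" using cont(6) continuation_by_A(1)[OF xy] shared by blast
  then obtain R where R: "Vs = P0 @ R" "R \<noteq> []" using continuation_by_Vs[OF xy] by blast
  have b: "path (y, R)" "pend t (y, R) = y"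
    using Vs_path Vs_end R(1) cont(4) by (auto simp: path_append pend_append)
  show ?thesis
    by (rule exI[of _ "(x, P0)"], rule exI[of _ "(y, R)"]) (simp add: b cont R U_eq pcomp_def)
qed

lemma disjoint_case:
  assumes xy: "x \<noteq> y" and disjoint: "set U \<inter> set Vs = {}"
  shows "\<exists>a1 a2 n. path a1 \<and> path a2 \<and> snd a1 \<noteq> [] \<and> snd a2 \<noteq> [] \<and> fst a2 = pend t a1
           \<and> (x, A) = pcomp a1 a2 \<and> n \<ge> 1 \<and> (x, U) = pcomp (ppow (x, A) n) a1"
proof -
  note cont = continuation_after_A[OF xy]
  have "hd P0 \<noteq> hd Vs"
  proof
    assume "hd P0 = hd Vs"
    then have "hd Vs \<in> set U" using U_eq cont(1) hd_in_set[of P0] by auto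
    then show False using disjoint Vs_ne by auto
  qed
  then obtain n k where nk: "0 < k" "k < length A" "1 \<le> n" "U = concat (replicate n A) @ take k A"
    using continuation_by_A(2)[OF xy] cont(6) by blast
  have "path (x, take k A @ drop k A)" using simple_cycle_facts(2)[OF A_cycle] by simp
  then have pieces: "path (x, take k A)" "path (pend t (x, take k A), drop k A)"
    unfolding path_append by auto
  show ?thesis
    by (rule exI[of _ "(x, take k A)"], rule exI[of _ "(pend t (x, take k A), drop k A)"],
        rule exI[of _ n])
      (use nk simple_cycle_facts(1)[OF A_cycle] in \<open>auto simp: pieces pcomp_def ppow_def\<close>)
qed

definition loop_relation_form :: "'a list \<Rightarrow> nat \<Rightarrow> nat \<Rightarrow> bool" where
  "loop_relation_form B n m \<longleftrightarrow>
     (U = concat (replicate n A) \<and> Vs = concat (replicate m B)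
        \<and> basis (apath s (last A) (hd B)) \<in> I \<and> basis (apath s (last B) (hd A)) \<in> I)
   \<or> (U = concat (replicate m (A @ B)) \<and> Vs = concat (replicate m (B @ A))
        \<and> basis (apath s (last A) (hd A)) \<in> I \<and> basis (apath s (last B) (hd B)) \<in> I)
   \<or> (U = concat (replicate m (A @ B)) @ A \<and> Vs = concat (replicate m (B @ A)) @ B
        \<and> basis (apath s (last A) (hd A)) \<in> I \<and> basis (apath s (last B) (hd B)) \<in> I)"

lemma closed_case_lists:
  assumes xy: "x = y"
  obtains B n m where "simple_cycle V E s t x (x, B)" "set A \<inter> set B = {}"
    "loop_relation_form B n m"
proof -
  obtain B R where B: "simple_cycle V E s t x (x, B)" "Vs = B @ R" "basis (x, B) \<notin> I"
    and disjoint: "set A \<inter> set B = {}"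
    using return_cycle[OF xy] by blast
  have hd_Vs: "hd Vs = hd B" using B(2) simple_cycle_facts(1)[OF B(1)] by simp
  have "hd A \<noteq> hd B" "last A \<noteq> last B"
    using disjoint simple_cycle_ends(5,6)[OF A_cycle] simple_cycle_ends(5,6)[OF B(1)]
    by (metis disjoint_iff)+
  from junction_cases[OF A_cycle B(1) this] show thesis
  proof
    assume "follows_only (last A) (hd A) \<and> follows_only (last B) (hd B)
      \<and> basis (apath s (last A) (hd B)) \<in> I \<and> basis (apath s (last B) (hd A)) \<in> I"
    then have AA: "follows_only (last A) (hd A)" and BB: "follows_only (last B) (hd B)"
      and junctions: "basis (apath s (last A) (hd B)) \<in> I" "basis (apath s (last B) (hd A)) \<in> I"
      by auto
    obtain n where n: "U = concat (replicate n A)"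
      using closed_periodic[OF A_cycle A_notin AA U_path U_notin U_ne hd_U U_end[folded xy]] by blast
    obtain m where m: "Vs = concat (replicate m B)"
      using closed_periodic[OF B(1,3) BB Vs_path Vs_notin Vs_ne hd_Vs Vs_end[folded xy]] by blast
    have "loop_relation_form B n m"
      unfolding loop_relation_form_def using n m junctions by simp
    then show thesis using that B(1) disjoint by blast
  next
    assume "follows_only (last A) (hd B) \<and> follows_only (last B) (hd A)
      \<and> basis (apath s (last A) (hd A)) \<in> I \<and> basis (apath s (last B) (hd B)) \<in> I"
    then have AB: "follows_only (last A) (hd B)" and BA: "follows_only (last B) (hd A)"
      and junctions: "basis (apath s (last A) (hd A)) \<in> I" "basis (apath s (last B) (hd B)) \<in> I"
      by auto
    obtain m where "(U = concat (replicate m (A @ B)) \<and> Vs = concat (replicate m (B @ A)))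
           \<or> (U = concat (replicate m (A @ B)) @ A \<and> Vs = concat (replicate m (B @ A)) @ B)"
      using alternating_case[OF xy B(1,3) hd_Vs AB BA] by blast
    then have "loop_relation_form B 0 m"
      unfolding loop_relation_form_def using junctions by (elim disjE) simp_all
    then show thesis using that B(1) disjoint by blast
  qed
qed

lemma closed_case:
  assumes xy: "x = y"
  shows "\<exists>b. simple_cycle V E s t x b \<and> set A \<inter> set (snd b) = {}
           \<and> (\<exists>n m::nat.
                ((x, U) = ppow (x, A) n \<and> (x, Vs) = ppow b m
                   \<and> basis (apath s (last A) (hd (snd b))) \<in> I
                   \<and> basis (apath s (last (snd b)) (hd A)) \<in> I)
              \<or> ((x, U) = ppow (pcomp (x, A) b) m \<and> (x, Vs) = ppow (pcomp b (x, A)) m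
                   \<and> basis (apath s (last A) (hd A)) \<in> I
                   \<and> basis (apath s (last (snd b)) (hd (snd b))) \<in> I)
              \<or> ((x, U) = pcomp (ppow (pcomp (x, A) b) m) (x, A)
                   \<and> (x, Vs) = pcomp (ppow (pcomp b (x, A)) m) b
                   \<and> basis (apath s (last A) (hd A)) \<in> I
                   \<and> basis (apath s (last (snd b)) (hd (snd b))) \<in> I))"
proof -
  obtain B n m where "simple_cycle V E s t x (x, B)" "set A \<inter> set B = {}"
    "loop_relation_form B n m"
    using closed_case_lists[OF xy] by blast
  then show ?thesis
    by (intro exI[of _ "(x, B)"] conjI exI[of _ n] exI[of _ m])
      (simp_all add: loop_relation_form_def ppow_def pcomp_def)
qed

end

theorem lemma2p1:
  fixes V :: "'v set" and E :: "'a set" and s t :: "'a \<Rightarrow> 'v"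
    and I :: "(('v \<times> 'a list) \<Rightarrow> 'k::alg_closed_field) set"
    and u v a :: "'v \<times> 'a list" and x y :: 'v and lam :: 'k
  assumes quiver: "finite_quiver V E s t"
    and adm: "admissible V E s t I"
    and sb: "special_biserial V E s t I"
    and u_path: "is_path V E s t u" and v_path: "is_path V E s t v"
    and u_start: "fst u = x" and v_start: "fst v = x"
    and u_end: "pend t u = y" and v_end: "pend t v = y"
    and uv: "u \<noteq> v"
    and u_notin: "basis u \<notin> I" and v_notin: "basis v \<notin> I"
    and lam: "lam \<noteq> 0"
    and rel: "(\<lambda>w. basis u w - lam * basis v w) \<in> I"
    and a_cyc: "simple_cycle V E s t x a"
    and u_starts: "\<exists>p. is_path V E s t p \<and> fst p = x \<and> u = pcomp a p"
  shows "(x \<noteq> y \<longrightarrow>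
            (set (snd u) \<inter> set (snd v) \<noteq> {} \<longrightarrow>
               (\<exists>p b. is_path V E s t p \<and> fst p = x \<and> pend t p = y
                   \<and> is_path V E s t b \<and> fst b = y \<and> pend t b = y \<and> snd b \<noteq> []
                   \<and> u = pcomp a p \<and> v = pcomp p b))
          \<and> (set (snd u) \<inter> set (snd v) = {} \<longrightarrow>
               (\<exists>a1 a2 n. is_path V E s t a1 \<and> is_path V E s t a2
                   \<and> snd a1 \<noteq> [] \<and> snd a2 \<noteq> [] \<and> fst a2 = pend t a1
                   \<and> a = pcomp a1 a2 \<and> n \<ge> 1 \<and> u = pcomp (ppow a n) a1)))
       \<and> (x = y \<longrightarrow>
            (\<exists>b. simple_cycle V E s t x b \<and> set (snd a) \<inter> set (snd b) = {}
               \<and> (\<exists>n m::nat.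
                    (u = ppow a n \<and> v = ppow b m
                       \<and> basis (apath s (last (snd a)) (hd (snd b))) \<in> I
                       \<and> basis (apath s (last (snd b)) (hd (snd a))) \<in> I)
                  \<or> (u = ppow (pcomp a b) m \<and> v = ppow (pcomp b a) m
                       \<and> basis (apath s (last (snd a)) (hd (snd a))) \<in> I
                       \<and> basis (apath s (last (snd b)) (hd (snd b))) \<in> I)
                  \<or> (u = pcomp (ppow (pcomp a b) m) a \<and> v = pcomp (ppow (pcomp b a) m) b
                       \<and> basis (apath s (last (snd a)) (hd (snd a))) \<in> I
                       \<and> basis (apath s (last (snd b)) (hd (snd b))) \<in> I))))"
proof -
  obtain U Vs A P0 where paths: "u = (x, U)" "v = (x, Vs)" "a = (x, A)" "U = A @ P0"
    using u_start v_start u_starts a_cyc unfolding simple_cycle_def pcomp_def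
    by (metis prod.collapse snd_conv)
  interpret cycle_relation V E s t I U Vs x y lam A P0
    by unfold_locales (use quiver adm sb u_path v_path u_end v_end uv u_notin v_notin lam rel a_cyc
        paths in auto)
  show ?thesis
    unfolding paths(1-3) snd_conv using shared_arrow_case disjoint_case closed_case by blast
qed

end
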